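(* Let $\mu>0$, $D\ge1$, and let $(V,T)$ be a Galton–Watson tree with root $v_o$ and Poisson$(\mu)$ offspring distribution, truncated at depth $D$; let $V_d$ be the set of nodes at depth $d$ and $\xi_d=|V_d|$. Let $\rho_1,\dots,\rho_D\in[0,1]$ with $\rho_1=1$. Colors are assigned as follows: the root has a color; each node at depth $d\in\{1,\dots,D\}$ performs an independent Bernoulli$(\rho_d)$ trial, and on success starts a new color (not used before), while on failure it adopts its parent's color. Then: (a) If $\zeta_d$ denotes the number of new colors created at depth $d$, then conditionally on $\xi_d=m$, $\zeta_d$ has the Binomial$(m,\rho_d)$ distribution. (b) If color $c$ is created at a node $u$ at depth $d$, then the set of nodes of color $c$ forms a subtree $(V_c,T_c)$ rooted at $u$, of depth at most $D-d$, which is a branching tree in which each color-$c$ node at depth $d+k-1$ ($1\le k\le D-d$) has a Poisson$(\mu(1-\rho_{d+k}))$ number of color-$c$ children; the random subtrees $(T_c)$ for different colors are independent. (c) Each color created at a depth $d<D$ has on average \[ \nu_d:=\mu^{D-d}\prod_{t=d+1}^{D}(1-\rho_t) \] leaves (nodes at depth $D$) of the same color descended from the node where it was created; in addition, $\zeta_D$ of the leaves carry colors newly created at depth $D$, each such color having exactly $\nu_D:=1$ instance.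
   Context: Truncated at depth $D$ means only generations $0,\dots,D$ are kept; nodes at depth $D$ are called leaves. *)

theory Defs
  imports "HOL-Probability.Probability"
begin

text \<open>Poisson law with rate r \<ge> 0, where rate 0 is the point mass at 0
  (the library's poisson_pmf is only specified for positive rate).\<close>
definition poisson0 :: "real \<Rightarrow> nat pmf" where
  "poisson0 r = (if r = 0 then return_pmf 0 else poisson_pmf r)"

text \<open>Colored trees: each node carries a flag saying whether a NEW colour is
  started at this node (True) or the parent's colour is adopted (False).
  The root carries True (its colour is "created" at the root, depth 0).\<close>
datatype ctree = CNode bool "ctree list"

datatype utree = UNode "utree list"

primrec cflag :: "ctree \<Rightarrow> bool" where
  "cflag (CNode b cs) = b"

text \<open>The coloured Galton--Watson process truncated at depth D.
  gen mu rho D h b is the law of the coloured subtree of a node at depth D - h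
  (h = remaining height) whose flag is b.\<close>
primrec gen :: "real \<Rightarrow> (nat \<Rightarrow> real) \<Rightarrow> nat \<Rightarrow> nat \<Rightarrow> bool \<Rightarrow> ctree pmf" where
  "gen mu rho D 0 b = return_pmf (CNode b [])"
| "gen mu rho D (Suc h) b =
     do { n \<leftarrow> poisson_pmf mu;
          cs \<leftarrow> replicate_pmf n (do { b' \<leftarrow> bernoulli_pmf (rho (D - h)); gen mu rho D h b' });
          return_pmf (CNode b cs) }"

definition colored_gw :: "real \<Rightarrow> (nat \<Rightarrow> real) \<Rightarrow> nat \<Rightarrow> ctree pmf" where
  "colored_gw mu rho D = gen mu rho D D True"

fun level :: "nat \<Rightarrow> ctree \<Rightarrow> ctree list" where
  "level 0 t = [t]"
| "level (Suc d) (CNode b cs) = concat (map (level d) cs)"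

definition xi :: "nat \<Rightarrow> ctree \<Rightarrow> nat" where
  "xi d t = length (level d t)"

definition zeta :: "nat \<Rightarrow> ctree \<Rightarrow> nat" where
  "zeta d t = length (filter cflag (level d t))"

text \<open>The colour class of a colour-creating node u: u together with all
  descendants reachable through nodes that adopt their parent's colour,
  i.e. exactly the nodes having u's colour; returned as a tree shape rooted at u.\<close>
fun color_shape :: "ctree \<Rightarrow> utree" where
  "color_shape (CNode b cs) = UNode (map color_shape (filter (\<lambda>c. \<not> cflag c) cs))"

fun cnodes :: "nat \<Rightarrow> ctree \<Rightarrow> (nat \<times> ctree) list" where
  "cnodes d (CNode b cs) =
     (if b then [(d, CNode b cs)] else []) @ concat (map (cnodes (Suc d)) cs)"

definition colors :: "ctree \<Rightarrow> (nat \<times> utree) list" where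
  "colors t = map (\<lambda>(d, u). (d, color_shape u)) (cnodes 0 t)"

fun uheight :: "utree \<Rightarrow> nat" where
  "uheight (UNode cs) = Max (insert 0 (set (map (\<lambda>c. Suc (uheight c)) cs)))"

fun ulevel :: "nat \<Rightarrow> utree \<Rightarrow> utree list" where
  "ulevel 0 t = [t]"
| "ulevel (Suc k) (UNode cs) = concat (map (ulevel k) cs)"

text \<open>Law of the branching tree of a colour created at depth D - h: a node at
  depth j < D has Poisson(mu (1 - rho (j+1))) children, truncated at depth D.\<close>
primrec color_law :: "real \<Rightarrow> (nat \<Rightarrow> real) \<Rightarrow> nat \<Rightarrow> nat \<Rightarrow> utree pmf" where
  "color_law mu rho D 0 = return_pmf (UNode [])"
| "color_law mu rho D (Suc h) =
     do { n \<leftarrow> poisson0 (mu * (1 - rho (D - h)));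
          cs \<leftarrow> replicate_pmf n (color_law mu rho D h);
          return_pmf (UNode cs) }"

end

(*
  (a) The nodes at depth d root independent subtrees whose flags are independent
  Bernoulli(rho d) trials, so the joint law of (xi d, zeta d) is a mixture over m of the
  laws of (m, Binomial(m, rho d)); this property survives every step of the construction.

  (b) Among the Poisson(mu) children of a node, those adopting its colour form an independent
  Bernoulli(1 - rho) thinning and hence are Poisson(mu (1 - rho)) in number; this yields the
  law color_law of each colour class. Independence is obtained sequentially: listing the
  colours in preorder of their creation nodes, the class of each colour has law color_law
  conditionally on all earlier classes and on its own creation depth. This property is
  preserved by concatenating independent lists and by prepending an entry of the right law.

  (c) The expected number of depth-D nodes of a colour class created at depth d is the product
  of the mean offspring numbers mu (1 - rho t), t = d + 1, ..., D.
*)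
theory Submission
  imports Defs
begin

section \<open>Bernoulli, binomial and Poisson laws\<close>

lemma map_pmf_Not_bernoulli_pmf:
  assumes "0 \<le> r" "r \<le> 1"
  shows "map_pmf Not (bernoulli_pmf r) = bernoulli_pmf (1 - r)"
proof (rule pmf_eqI)
  fix b
  have "pmf (map_pmf Not (bernoulli_pmf r)) b = pmf (bernoulli_pmf r) (\<not> b)"
    using pmf_map_inj'[of Not "bernoulli_pmf r" "\<not> b"] by (simp add: inj_def)
  then show "pmf (map_pmf Not (bernoulli_pmf r)) b = pmf (bernoulli_pmf (1 - r)) b"
    using assms by (cases b) simp_all
qed

lemma binomial_pmf_p_0: "binomial_pmf n 0 = return_pmf 0"
  by (rule pmf_eqI) (auto simp: indicator_def)

lemma replicate_pmf_map_pmf: "replicate_pmf n (map_pmf f p) = map_pmf (map f) (replicate_pmf n p)"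
  by (induction n) (simp_all add: map_pmf_def bind_assoc_pmf bind_return_pmf)

lemma measure_cond_pmf:
  assumes "set_pmf p \<inter> s \<noteq> {}"
  shows "measure_pmf.prob (cond_pmf p s) A = measure_pmf.prob p (s \<inter> A) / measure_pmf.prob p s"
proof -
  have "measure_pmf (cond_pmf p s) = uniform_measure (measure_pmf p) s"
    using assms by (rule cond_pmf.rep_eq)
  moreover have "emeasure (measure_pmf p) s \<noteq> 0"
    using assms by (simp add: emeasure_measure_pmf_not_zero)
  ultimately show ?thesis
    by (simp add: measure_pmf.emeasure_finite)
qed

lemma poisson_thinning:
  assumes mu: "mu > 0" and q: "0 \<le> q" "q \<le> 1"
  shows "poisson_pmf mu \<bind> (\<lambda>n. binomial_pmf n q) = poisson0 (mu * q)"
proof (cases "q = 0")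
  case True
  then show ?thesis by (simp add: poisson0_def binomial_pmf_p_0 bind_return_pmf')
next
  case False
  with q have mq: "mu * q > 0" using mu by simp
  show ?thesis
  proof (rule pmf_eqI)
    fix k
    define f where "f n = (mu ^ n / fact n * exp (- mu)) * ((n choose k) * q ^ k * (1 - q) ^ (n - k))" for n
    define c where "c = exp (- mu) * (mu * q) ^ k / fact k"
    have f_less: "f n = 0" if "n < k" for n using that by (simp add: f_def)
    have f_shift: "f (i + k) = c * ((mu * (1 - q)) ^ i / fact i)" for i
    proof -
      have "real ((i + k) choose k) = fact (i + k) / (fact k * fact i)"
        by (simp add: binomial_fact)
      then show ?thesis by (simp add: f_def c_def power_add power_mult_distrib)
    qed
    have "(\<lambda>i. c * ((mu * (1 - q)) ^ i / fact i)) sums (c * exp (mu * (1 - q)))"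
      by (rule sums_mult) (use exp_converges[of "mu * (1 - q)"] in \<open>simp add: divide_inverse mult.commute\<close>)
    moreover have "c * exp (mu * (1 - q)) = (mu * q) ^ k / fact k * exp (- (mu * q))"
      by (simp add: c_def algebra_simps flip: exp_add)
    ultimately have "f sums ((mu * q) ^ k / fact k * exp (- (mu * q)))"
      by (simp add: f_shift flip: sums_zero_iff_shift[OF f_less])
    moreover have "0 \<le> f n" for n using mu q by (simp add: f_def)
    ultimately have "(\<Sum>n. ennreal (f n)) = ennreal (pmf (poisson0 (mu * q)) k)"
      using mq mu \<open>q \<noteq> 0\<close> by (intro sums_unique[symmetric]) (simp_all add: poisson0_def less_imp_le)
    moreover have "ennreal (pmf (poisson_pmf mu \<bind> (\<lambda>n. binomial_pmf n q)) k) = (\<Sum>n. ennreal (f n))"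
      using mu q
      by (simp add: ennreal_pmf_bind nn_integral_measure_pmf nn_integral_count_space_nat f_def
          flip: ennreal_mult)
    ultimately show "pmf (poisson_pmf mu \<bind> (\<lambda>n. binomial_pmf n q)) k = pmf (poisson0 (mu * q)) k"
      by simp
  qed
qed

lemma nn_integral_poisson0:
  assumes "r \<ge> 0"
  shows "(\<integral>\<^sup>+n. of_nat n \<partial>poisson0 r) = ennreal r"
proof (cases "r = 0")
  case True
  then show ?thesis by (simp add: poisson0_def)
next
  case False
  with assms have r: "r > 0" by simp
  define f where "f n = real n * (r ^ n / fact n * exp (- r))" for n
  have f_Suc: "f (Suc i) = (r * exp (- r)) * (r ^ i / fact i)" for i
    unfolding f_def by (simp add: divide_simps)
  have "(\<lambda>i. (r * exp (- r)) * (r ^ i / fact i)) sums ((r * exp (- r)) * exp r)"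
    by (rule sums_mult) (use exp_converges[of r] in \<open>simp add: divide_inverse mult.commute\<close>)
  then have "(\<lambda>i. f (Suc i)) sums r"
    by (simp add: f_Suc mult.assoc flip: exp_add)
  then have "f sums r"
    by (subst (asm) sums_Suc_iff) (simp add: f_def)
  moreover have "0 \<le> f n" for n using r by (simp add: f_def)
  ultimately have "(\<Sum>n. ennreal (f n)) = ennreal r"
    using r by (intro sums_unique[symmetric]) (simp add: less_imp_le)
  moreover have "(\<integral>\<^sup>+n. of_nat n \<partial>poisson0 r) = (\<Sum>n. ennreal (f n))"
    using r unfolding nn_integral_measure_pmf
    by (simp add: poisson0_def f_def nn_integral_count_space_nat ennreal_of_nat_eq_real_of_nat
        algebra_simps flip: ennreal_mult)
  ultimately show ?thesis by simp
qed

lemma nn_integral_sum_list_replicate_pmf: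
  "(\<integral>\<^sup>+xs. sum_list (map f xs) \<partial>replicate_pmf n p) = of_nat n * (\<integral>\<^sup>+x. f x \<partial>p)"
proof (induction n)
  case 0
  then show ?case by simp
next
  case (Suc n)
  have "(\<integral>\<^sup>+xs. sum_list (map f xs) \<partial>replicate_pmf (Suc n) p)
      = (\<integral>\<^sup>+x. f x + of_nat n * (\<integral>\<^sup>+x. f x \<partial>p) \<partial>p)"
    by (simp add: nn_integral_add Suc)
  then show ?case
    by (simp add: nn_integral_add algebra_simps)
qed

lemma replicate_pmf_thinning:
  assumes "0 \<le> q" "q \<le> 1"
  shows "map_pmf (\<lambda>xs. map snd (filter fst xs)) (replicate_pmf n (pair_pmf (bernoulli_pmf q) p))
       = binomial_pmf n q \<bind> (\<lambda>m. replicate_pmf m p)"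
proof (induction n)
  case 0
  then show ?case using assms by (simp add: binomial_pmf_0 bind_return_pmf)
next
  case (Suc n)
  let ?thin = "map_pmf (\<lambda>xs. map snd (filter fst xs))"
  have "?thin (replicate_pmf (Suc n) (pair_pmf (bernoulli_pmf q) p))
      = do {b \<leftarrow> bernoulli_pmf q; x \<leftarrow> p; ys \<leftarrow> ?thin (replicate_pmf n (pair_pmf (bernoulli_pmf q) p));
            return_pmf (if b then x # ys else ys)}"
    by (simp add: pair_pmf_def map_pmf_def bind_assoc_pmf bind_return_pmf) (intro bind_pmf_cong refl; simp)
  also have "\<dots> = do {b \<leftarrow> bernoulli_pmf q; m \<leftarrow> binomial_pmf n q; x \<leftarrow> p; ys \<leftarrow> replicate_pmf m p;
            return_pmf (if b then x # ys else ys)}"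
    by (simp add: Suc bind_assoc_pmf) (subst bind_commute_pmf[where A = p], simp)
  also have "\<dots> = do {b \<leftarrow> bernoulli_pmf q; m \<leftarrow> binomial_pmf n q; replicate_pmf ((if b then 1 else 0) + m) p}"
    by (intro bind_pmf_cong refl) (auto simp: bind_return_pmf')
  also have "\<dots> = binomial_pmf (Suc n) q \<bind> (\<lambda>m. replicate_pmf m p)"
    using assms by (simp add: binomial_pmf_Suc bind_assoc_pmf bind_return_pmf)
  finally show ?case .
qed

section \<open>Laws given the past\<close>

text \<open>J is the joint law of a tag and of a list of labelled values. The property says that,
  conditionally on the tag, on the entries before it and on its own label k, the value of
  entry j has law L k. The tag is what lets the property pass through the recursive
  construction of the tree: there it is the colour class of the current root, which is still
  being assembled while the colours below it are already listed.\<close>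
definition law_given_past :: "('k \<Rightarrow> 's pmf) \<Rightarrow> ('a \<times> ('k \<times> 's) list) pmf \<Rightarrow> bool" where
  "law_given_past L J \<longleftrightarrow> (\<forall>(F :: 'a \<Rightarrow> ('k \<times> 's) list \<Rightarrow> ennreal) j k s.
     (\<integral>\<^sup>+x. F (fst x) (take j (snd x)) * indicator {r. j < length r \<and> r ! j = (k, s)} (snd x) \<partial>J)
   = ennreal (pmf (L k) s) *
     (\<integral>\<^sup>+x. F (fst x) (take j (snd x)) * indicator {r. j < length r \<and> fst (r ! j) = k} (snd x) \<partial>J))"

lemma law_given_pastD:
  "law_given_past L J \<Longrightarrow>
     (\<integral>\<^sup>+x. F (fst x) (take j (snd x)) * indicator {r. j < length r \<and> r ! j = (k, s)} (snd x) \<partial>J)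
   = ennreal (pmf (L k) s) *
     (\<integral>\<^sup>+x. F (fst x) (take j (snd x)) * indicator {r. j < length r \<and> fst (r ! j) = k} (snd x) \<partial>J)"
  unfolding law_given_past_def by blast

lemma law_given_past_return: "law_given_past L (return_pmf (a, []))"
  unfolding law_given_past_def by simp

lemma law_given_past_bind:
  fixes K :: "'x \<Rightarrow> ('a \<times> ('k \<times> 's) list) pmf"
  assumes "\<And>x. x \<in> set_pmf N \<Longrightarrow> law_given_past L (K x)"
  shows "law_given_past L (N \<bind> K)"
  unfolding law_given_past_def
proof (intro allI)
  fix F :: "'a \<Rightarrow> ('k \<times> 's) list \<Rightarrow> ennreal" and j k s
  let ?P = "\<lambda>x. F (fst x) (take j (snd x)) * indicator {r. j < length r \<and> r ! j = (k, s)} (snd x)"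
  let ?Q = "\<lambda>x. F (fst x) (take j (snd x)) * indicator {r. j < length r \<and> fst (r ! j) = k} (snd x)"
  have "(\<integral>\<^sup>+x. ?P x \<partial>bind_pmf N K) = (\<integral>\<^sup>+y. ennreal (pmf (L k) s) * (\<integral>\<^sup>+x. ?Q x \<partial>K y) \<partial>N)"
    by (auto simp: AE_measure_pmf_iff intro!: nn_integral_cong_AE law_given_pastD assms)
  also have "\<dots> = ennreal (pmf (L k) s) * (\<integral>\<^sup>+x. ?Q x \<partial>bind_pmf N K)"
    by (simp add: nn_integral_cmult)
  finally show "(\<integral>\<^sup>+x. ?P x \<partial>bind_pmf N K) = ennreal (pmf (L k) s) * (\<integral>\<^sup>+x. ?Q x \<partial>bind_pmf N K)" .
qed

lemma law_given_past_map_tag: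
  fixes J :: "('a \<times> ('k \<times> 's) list) pmf"
  assumes "law_given_past L J"
  shows "law_given_past L (map_pmf (\<lambda>x. (g (fst x), snd x)) J)"
  unfolding law_given_past_def
  using law_given_pastD[OF assms, of "\<lambda>a. _ (g a)"] by simp

lemma law_given_past_Cons:
  fixes J :: "('s \<times> ('k \<times> 's) list) pmf" and c :: 'b
  assumes past: "law_given_past L J" and first: "map_pmf fst J = L k"
  shows "law_given_past L (map_pmf (\<lambda>x. (c, (k, fst x) # snd x)) J)"
  unfolding law_given_past_def
proof (intro allI)
  fix F :: "'b \<Rightarrow> ('k \<times> 's) list \<Rightarrow> ennreal" and j d s
  show "(\<integral>\<^sup>+x. F (fst x) (take j (snd x)) * indicator {r. j < length r \<and> r ! j = (d, s)} (snd x)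
          \<partial>map_pmf (\<lambda>x. (c, (k, fst x) # snd x)) J)
      = ennreal (pmf (L d) s) * (\<integral>\<^sup>+x. F (fst x) (take j (snd x)) * indicator {r. j < length r \<and> fst (r ! j) = d} (snd x)
          \<partial>map_pmf (\<lambda>x. (c, (k, fst x) # snd x)) J)"
  proof (cases j)
    case 0
    have "emeasure J {x. fst x = s} = emeasure (map_pmf fst J) {s}"
      by (simp add: vimage_def)
    also have "\<dots> = ennreal (pmf (L k) s)"
      by (simp add: first emeasure_pmf_single)
    finally have marginal: "emeasure J {x. fst x = s} = ennreal (pmf (L k) s)" .
    have "(\<integral>\<^sup>+x. F c [] * indicator {r. 0 < length r \<and> r ! 0 = (d, s)} ((k, fst x) # snd x) \<partial>J)
        = (\<integral>\<^sup>+x. (F c [] * indicator {k} d) * indicator {x. fst x = s} x \<partial>J)"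
      by (intro nn_integral_cong) (auto simp: indicator_def)
    also have "\<dots> = F c [] * indicator {k} d * ennreal (pmf (L k) s)"
      by (simp add: nn_integral_cmult_indicator marginal)
    finally have "(\<integral>\<^sup>+x. F c [] * indicator {r. 0 < length r \<and> r ! 0 = (d, s)} ((k, fst x) # snd x) \<partial>J)
        = F c [] * indicator {k} d * ennreal (pmf (L k) s)" .
    then show ?thesis using 0 by (simp add: indicator_def mult.commute)
  next
    case (Suc j')
    then show ?thesis
      using law_given_pastD[OF past, of "\<lambda>a pre. F c ((k, a) # pre)" j' d s]
      by (simp add: indicator_def)
  qed
qed

lemma nn_integral_nth_append_indicator:
  fixes M :: "('b \<times> 'e list) pmf"
  shows "(\<integral>\<^sup>+y. G y (take j (a @ snd y)) * indicator {r. j < length r \<and> P (r ! j)} (a @ snd y) \<partial>M)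
   = (\<integral>\<^sup>+y. G y (take j a) \<partial>M) * indicator {r. j < length r \<and> P (r ! j)} a
   + (\<integral>\<^sup>+y. G y (a @ take (j - length a) (snd y))
        * indicator {r. j - length a < length r \<and> P (r ! (j - length a))} (snd y) \<partial>M)
     * indicator {a. length a \<le> j} a"
proof (cases "j < length a")
  case True
  then have "(\<integral>\<^sup>+y. G y (take j (a @ snd y)) * indicator {r. j < length r \<and> P (r ! j)} (a @ snd y) \<partial>M)
      = (\<integral>\<^sup>+y. G y (take j a) * indicator {r. j < length r \<and> P (r ! j)} a \<partial>M)"
    by (intro nn_integral_cong) (simp add: nth_append indicator_def)
  also have "\<dots> = (\<integral>\<^sup>+y. G y (take j a) \<partial>M) * indicator {r. j < length r \<and> P (r ! j)} a"
    by (rule nn_integral_multc) simp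
  finally show ?thesis
    using True by simp
next
  case False
  then show ?thesis
    by (simp add: nth_append indicator_def) (intro nn_integral_cong; auto)
qed

lemma law_given_past_append:
  fixes J1 :: "('a \<times> ('k \<times> 's) list) pmf" and J2 :: "('b \<times> ('k \<times> 's) list) pmf"
  assumes past1: "law_given_past L J1" and past2: "law_given_past L J2"
  shows "law_given_past L (map_pmf (\<lambda>(x, y). ((fst x, fst y), snd x @ snd y)) (pair_pmf J1 J2))"
  unfolding law_given_past_def
proof (intro allI)
  fix F :: "'a \<times> 'b \<Rightarrow> ('k \<times> 's) list \<Rightarrow> ennreal" and j k s
  let ?J = "map_pmf (\<lambda>(x, y). ((fst x, fst y), snd x @ snd y)) (pair_pmf J1 J2)"
  let ?p = "ennreal (pmf (L k) s)"
  let ?I1 = "indicator {r. j < length r \<and> r ! j = (k, s)} :: ('k \<times> 's) list \<Rightarrow> ennreal"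
  let ?I2 = "indicator {r. j < length r \<and> fst (r ! j) = k} :: ('k \<times> 's) list \<Rightarrow> ennreal"
  define F1 where "F1 a pre = (\<integral>\<^sup>+y. F (a, fst y) pre \<partial>J2)" for a pre
  define B where "B x = (\<integral>\<^sup>+y. F (fst x, fst y) (snd x @ take (j - length (snd x)) (snd y))
      * indicator {r. j - length (snd x) < length r \<and> fst (r ! (j - length (snd x))) = k} (snd y) \<partial>J2)
      * indicator {a. length a \<le> j} (snd x)" for x :: "'a \<times> ('k \<times> 's) list"
  have inner1: "(\<integral>\<^sup>+y. F (fst x, fst y) (take j (snd x @ snd y)) * ?I1 (snd x @ snd y) \<partial>J2)
      = F1 (fst x) (take j (snd x)) * ?I1 (snd x) + ?p * B x" for x
    using nn_integral_nth_append_indicator[where G = "\<lambda>y. F (fst x, fst y)" and a = "snd x"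
        and P = "\<lambda>e. e = (k, s)" and M = J2]
      law_given_pastD[OF past2, of "\<lambda>b pre. F (fst x, b) (snd x @ pre)" "j - length (snd x)" k s]
    by (simp add: F1_def B_def mult.assoc)
  have inner2: "(\<integral>\<^sup>+y. F (fst x, fst y) (take j (snd x @ snd y)) * ?I2 (snd x @ snd y) \<partial>J2)
      = F1 (fst x) (take j (snd x)) * ?I2 (snd x) + B x" for x
    using nn_integral_nth_append_indicator[where G = "\<lambda>y. F (fst x, fst y)" and a = "snd x"
        and P = "\<lambda>e. fst e = k" and M = J2]
    by (simp add: F1_def B_def)
  have "(\<integral>\<^sup>+z. F (fst z) (take j (snd z)) * ?I1 (snd z) \<partial>?J)
      = (\<integral>\<^sup>+x. F1 (fst x) (take j (snd x)) * ?I1 (snd x) + ?p * B x \<partial>J1)"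
    by (simp only: nn_integral_map_pmf nn_integral_pair_pmf' case_prod_beta fst_conv snd_conv inner1)
  also have "\<dots> = (\<integral>\<^sup>+x. F1 (fst x) (take j (snd x)) * ?I1 (snd x) \<partial>J1) + ?p * (\<integral>\<^sup>+x. B x \<partial>J1)"
    by (simp add: nn_integral_add nn_integral_cmult)
  also have "(\<integral>\<^sup>+x. F1 (fst x) (take j (snd x)) * ?I1 (snd x) \<partial>J1)
      = ?p * (\<integral>\<^sup>+x. F1 (fst x) (take j (snd x)) * ?I2 (snd x) \<partial>J1)"
    using law_given_pastD[OF past1, of F1 j k s] by simp
  also have "?p * (\<integral>\<^sup>+x. F1 (fst x) (take j (snd x)) * ?I2 (snd x) \<partial>J1) + ?p * (\<integral>\<^sup>+x. B x \<partial>J1)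
      = ?p * (\<integral>\<^sup>+x. F1 (fst x) (take j (snd x)) * ?I2 (snd x) + B x \<partial>J1)"
    by (simp add: nn_integral_add distrib_left)
  also have "(\<integral>\<^sup>+x. F1 (fst x) (take j (snd x)) * ?I2 (snd x) + B x \<partial>J1)
      = (\<integral>\<^sup>+z. F (fst z) (take j (snd z)) * ?I2 (snd z) \<partial>?J)"
    by (simp only: nn_integral_map_pmf nn_integral_pair_pmf' case_prod_beta fst_conv snd_conv inner2)
  finally show "(\<integral>\<^sup>+z. F (fst z) (take j (snd z)) * ?I1 (snd z) \<partial>?J)
      = ?p * (\<integral>\<^sup>+z. F (fst z) (take j (snd z)) * ?I2 (snd z) \<partial>?J)" .
qed

lemma law_given_past_concat_replicate:
  fixes J :: "('a \<times> ('k \<times> 's) list) pmf"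
  assumes "law_given_past L J"
  shows "law_given_past L (map_pmf (\<lambda>xs. (map fst xs, concat (map snd xs))) (replicate_pmf n J))"
proof (induction n)
  case 0
  then show ?case by (simp add: law_given_past_return)
next
  case (Suc n)
  have "map_pmf (\<lambda>xs. (map fst xs, concat (map snd xs))) (replicate_pmf (Suc n) J)
      = map_pmf (\<lambda>x. (fst (fst x) # snd (fst x), snd x))
          (map_pmf (\<lambda>(x, y). ((fst x, fst y), snd x @ snd y))
            (pair_pmf J (map_pmf (\<lambda>xs. (map fst xs, concat (map snd xs))) (replicate_pmf n J))))"
    by (simp add: pair_pmf_def map_pmf_def bind_assoc_pmf bind_return_pmf)
  then show ?case
    by (simp only:) (intro law_given_past_map_tag law_given_past_append assms Suc)
qed

lemma cond_pmf_law_given_past: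
  fixes T :: "'t pmf" and cl :: "'t \<Rightarrow> ('k \<times> 's) list"
  assumes past: "law_given_past L (map_pmf (\<lambda>t. ((), cl t)) T)"
    and E: "E = {t. j < length (cl t) \<and> take j (cl t) \<in> Q \<and> fst (cl t ! j) = k}"
    and nonempty: "set_pmf T \<inter> E \<noteq> {}"
  shows "map_pmf (\<lambda>t. snd (cl t ! j)) (cond_pmf T E) = L k"
proof (rule pmf_eqI)
  fix s
  let ?E' = "{t. j < length (cl t) \<and> take j (cl t) \<in> Q \<and> cl t ! j = (k, s)}"
  have "indicator Q (take j (cl t)) * indicator {r. j < length r \<and> r ! j = (k, s)} (cl t)
      = (indicator ?E' t :: ennreal)"
    and "indicator Q (take j (cl t)) * indicator {r. j < length r \<and> fst (r ! j) = k} (cl t)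
      = (indicator E t :: ennreal)" for t
    by (simp_all add: E indicator_def)
  then have "emeasure T ?E' = ennreal (pmf (L k) s) * emeasure T E"
    using law_given_pastD[OF past, of "\<lambda>_ pre. indicator Q pre" j k s] by simp
  then have "measure_pmf.prob T ?E' = pmf (L k) s * measure_pmf.prob T E"
    by (simp add: measure_pmf.emeasure_eq_measure flip: ennreal_mult)
  moreover have "E \<inter> (\<lambda>t. snd (cl t ! j)) -` {s} = ?E'"
    unfolding E by (auto simp: prod_eq_iff)
  moreover have "measure_pmf.prob T E \<noteq> 0"
    using nonempty measure_pmf_posI by fastforce
  ultimately show "pmf (map_pmf (\<lambda>t. snd (cl t ! j)) (cond_pmf T E)) s = pmf (L k) s"
    by (simp add: pmf_map measure_cond_pmf[OF nonempty])
qed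

section \<open>Binomial mixtures\<close>

definition trials_pmf :: "real \<Rightarrow> nat \<Rightarrow> (nat \<times> nat) pmf" where
  "trials_pmf r m = map_pmf (\<lambda>bs. (m, length (filter id bs))) (replicate_pmf m (bernoulli_pmf r))"

definition binomial_mixture :: "real \<Rightarrow> (nat \<times> nat) pmf \<Rightarrow> bool" where
  "binomial_mixture r J \<longleftrightarrow> (\<exists>N. J = N \<bind> trials_pmf r)"

lemma binomial_mixture_bind:
  assumes "\<And>x. x \<in> set_pmf M \<Longrightarrow> binomial_mixture r (K x)"
  shows "binomial_mixture r (M \<bind> K)"
proof -
  obtain N where "\<And>x. x \<in> set_pmf M \<Longrightarrow> K x = N x \<bind> trials_pmf r"
    using assms unfolding binomial_mixture_def by metis
  then have "M \<bind> K = (M \<bind> N) \<bind> trials_pmf r"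
    by (simp add: bind_assoc_pmf cong: bind_pmf_cong)
  then show ?thesis unfolding binomial_mixture_def by blast
qed

lemma binomial_mixture_trials_pmf: "binomial_mixture r (trials_pmf r m)"
  unfolding binomial_mixture_def by (rule exI[of _ "return_pmf m"]) (simp add: bind_return_pmf)

lemma binomial_mixture_add:
  assumes "binomial_mixture r J1" "binomial_mixture r J2"
  shows "binomial_mixture r (map_pmf (\<lambda>(x, y). (fst x + fst y, snd x + snd y)) (pair_pmf J1 J2))"
proof -
  obtain N1 N2 where J: "J1 = N1 \<bind> trials_pmf r" "J2 = N2 \<bind> trials_pmf r"
    using assms unfolding binomial_mixture_def by blast
  have "map_pmf (\<lambda>(x, y). (fst x + fst y, snd x + snd y)) (pair_pmf J1 J2)
      = do {m1 \<leftarrow> N1; m2 \<leftarrow> N2; bs1 \<leftarrow> replicate_pmf m1 (bernoulli_pmf r);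
            bs2 \<leftarrow> replicate_pmf m2 (bernoulli_pmf r);
            return_pmf (m1 + m2, length (filter id (bs1 @ bs2)))}"
    unfolding J trials_pmf_def pair_pmf_def map_pmf_def bind_assoc_pmf bind_return_pmf
    by (subst bind_commute_pmf[where A = "replicate_pmf _ _"]) simp
  also have "\<dots> = do {m1 \<leftarrow> N1; m2 \<leftarrow> N2; trials_pmf r (m1 + m2)}"
    by (simp add: trials_pmf_def replicate_pmf_distrib map_pmf_def bind_assoc_pmf bind_return_pmf)
  also have "\<dots> = map_pmf (\<lambda>(a, b). a + b) (pair_pmf N1 N2) \<bind> trials_pmf r"
    by (simp add: pair_pmf_def map_pmf_def bind_assoc_pmf bind_return_pmf)
  finally show ?thesis unfolding binomial_mixture_def by blast
qed

lemma binomial_mixture_sum_replicate: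
  assumes "binomial_mixture r J"
  shows "binomial_mixture r (map_pmf (\<lambda>xs. (sum_list (map fst xs), sum_list (map snd xs))) (replicate_pmf n J))"
proof (induction n)
  case 0
  then show ?case using binomial_mixture_trials_pmf[of r 0] by (simp add: trials_pmf_def)
next
  case (Suc n)
  have "map_pmf (\<lambda>xs. (sum_list (map fst xs), sum_list (map snd xs))) (replicate_pmf (Suc n) J)
      = map_pmf (\<lambda>(x, y). (fst x + fst y, snd x + snd y))
          (pair_pmf J (map_pmf (\<lambda>xs. (sum_list (map fst xs), sum_list (map snd xs))) (replicate_pmf n J)))"
    by (simp add: pair_pmf_def map_pmf_def bind_assoc_pmf bind_return_pmf)
  then show ?case using binomial_mixture_add[OF assms Suc] by simp
qed

lemma pmf_bind_trials_pmf:
  assumes "0 \<le> r" "r \<le> 1"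
  shows "pmf (N \<bind> trials_pmf r) (m, z) = pmf N m * pmf (binomial_pmf m r) z"
proof -
  have "pmf (trials_pmf r m') (m, z) = pmf (binomial_pmf m r) z * indicator {m} m'" for m'
  proof -
    have "trials_pmf r m' = map_pmf (Pair m') (binomial_pmf m' r)"
      using assms by (simp add: trials_pmf_def binomial_pmf_altdef pmf.map_comp o_def)
    then show ?thesis
      by (cases "m' = m") (auto simp: pmf_map_inj' inj_on_def pmf_eq_0_set_pmf)
  qed
  then have "ennreal (pmf (N \<bind> trials_pmf r) (m, z))
      = (\<integral>\<^sup>+m'. ennreal (pmf (binomial_pmf m r) z) * indicator {m} m' \<partial>N)"
    by (simp add: ennreal_pmf_bind ennreal_mult' ennreal_indicator)
  also have "\<dots> = ennreal (pmf (binomial_pmf m r) z) * emeasure N {m}"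
    by (rule nn_integral_cmult_indicator) simp
  also have "\<dots> = ennreal (pmf N m * pmf (binomial_pmf m r) z)"
    by (simp add: emeasure_pmf_single mult.commute ennreal_mult')
  finally show ?thesis by simp
qed

lemma cond_pmf_binomial_mixture:
  assumes mixture: "binomial_mixture r (map_pmf (\<lambda>t. (f t, g t)) T)"
    and r: "0 \<le> r" "r \<le> 1" and nonempty: "set_pmf T \<inter> {t. f t = m} \<noteq> {}"
  shows "map_pmf g (cond_pmf T {t. f t = m}) = binomial_pmf m r"
proof (rule pmf_eqI)
  fix z
  obtain N where N: "map_pmf (\<lambda>t. (f t, g t)) T = N \<bind> trials_pmf r"
    using mixture unfolding binomial_mixture_def by blast
  have "map_pmf f T = map_pmf fst (map_pmf (\<lambda>t. (f t, g t)) T)"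
    by (simp add: pmf.map_comp o_def)
  also have "\<dots> = N"
    unfolding N map_bind_pmf by (simp add: trials_pmf_def pmf.map_comp o_def bind_return_pmf')
  finally have marginal: "map_pmf f T = N" .
  have "measure_pmf.prob T {t. f t = m} = pmf N m"
    unfolding marginal[symmetric] by (simp add: pmf_map vimage_def)
  moreover have "measure_pmf.prob T {t. f t = m} \<noteq> 0"
    by (rule measure_measure_pmf_not_zero[OF nonempty])
  moreover have "measure_pmf.prob T {t. f t = m \<and> g t = z} = pmf N m * pmf (binomial_pmf m r) z"
    using arg_cong[OF N, of "\<lambda>p. pmf p (m, z)"] by (simp add: pmf_bind_trials_pmf[OF r] pmf_map vimage_def)
  ultimately show "pmf (map_pmf g (cond_pmf T {t. f t = m})) z = pmf (binomial_pmf m r) z"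
    by (simp add: pmf_map measure_cond_pmf[OF nonempty] vimage_def Collect_conj_eq)
qed

section \<open>The coloured Galton--Watson tree\<close>

lemma cflag_gen: "t \<in> set_pmf (gen mu rho D h b) \<Longrightarrow> cflag t = b"
  by (cases h) auto

lemma map_pmf_cflag_child: "map_pmf cflag (bernoulli_pmf r \<bind> gen mu rho D h) = bernoulli_pmf r"
proof -
  have "map_pmf cflag (gen mu rho D h b) = map_pmf (\<lambda>_. b) (gen mu rho D h b)" for b
    by (intro map_pmf_cong refl) (simp add: cflag_gen)
  then show ?thesis
    by (simp add: map_bind_pmf bind_return_pmf')
qed

lemma map_pmf_flag_color_shape_child:
  assumes "0 \<le> r" "r \<le> 1" and shape: "\<And>b. map_pmf color_shape (gen mu rho D h b) = L"
  shows "map_pmf (\<lambda>c. (\<not> cflag c, color_shape c)) (bernoulli_pmf r \<bind> gen mu rho D h)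
       = pair_pmf (bernoulli_pmf (1 - r)) L"
proof -
  have "map_pmf (\<lambda>c. (\<not> cflag c, color_shape c)) (gen mu rho D h b)
      = map_pmf (Pair (\<not> b)) (map_pmf color_shape (gen mu rho D h b))" for b
    unfolding pmf.map_comp by (intro map_pmf_cong refl) (simp add: cflag_gen)
  then have "map_pmf (\<lambda>c. (\<not> cflag c, color_shape c)) (gen mu rho D h b) = map_pmf (Pair (\<not> b)) L" for b
    by (simp add: shape)
  then have "map_pmf (\<lambda>c. (\<not> cflag c, color_shape c)) (bernoulli_pmf r \<bind> gen mu rho D h)
      = map_pmf Not (bernoulli_pmf r) \<bind> (\<lambda>b. map_pmf (Pair b) L)"
    by (simp add: map_bind_pmf bind_map_pmf)
  also have "\<dots> = bernoulli_pmf (1 - r) \<bind> (\<lambda>b. map_pmf (Pair b) L)"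
    using assms(1,2) by (simp only: map_pmf_Not_bernoulli_pmf)
  finally show ?thesis
    by (simp add: pair_pmf_def map_pmf_def)
qed

definition colors_from :: "nat \<Rightarrow> ctree \<Rightarrow> (nat \<times> utree) list" where
  "colors_from k t = map (\<lambda>(d, u). (d, color_shape u)) (cnodes k t)"

fun descendant_colors :: "nat \<Rightarrow> ctree \<Rightarrow> (nat \<times> utree) list" where
  "descendant_colors k (CNode b cs) = concat (map (colors_from (Suc k)) cs)"

lemma colors_from_eq:
  "colors_from k t = (if cflag t then [(k, color_shape t)] else []) @ descendant_colors k t"
  by (cases t) (simp add: colors_from_def[abs_def] map_concat o_def)

lemma colors_eq_colors_from: "colors t = colors_from 0 t"
  by (simp add: colors_def colors_from_def)

lemma uheight_eq_0_iff: "uheight s = 0 \<longleftrightarrow> s = UNode []"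
  by (cases s) (auto simp: Max_le_iff simp flip: le_zero_eq)

fun height_le :: "nat \<Rightarrow> ctree \<Rightarrow> bool" where
  "height_le 0 (CNode b cs) \<longleftrightarrow> cs = []"
| "height_le (Suc h) (CNode b cs) \<longleftrightarrow> (\<forall>c\<in>set cs. height_le h c)"

lemma height_le_gen: "t \<in> set_pmf (gen mu rho D h b) \<Longrightarrow> height_le h t"
  by (induction h arbitrary: t b) (fastforce simp: set_replicate_pmf in_lists_conv_set)+

lemma uheight_color_shape_le: "height_le h t \<Longrightarrow> uheight (color_shape t) \<le> h"
proof (induction h t rule: height_le.induct)
  case (2 h b cs)
  then show ?case by (auto simp: Max_le_iff)
qed simp

lemma height_le_cnodes:
  "height_le h t \<Longrightarrow> (d, u) \<in> set (cnodes k t) \<Longrightarrow> k \<le> d \<and> d - k \<le> h \<and> height_le (h - (d - k)) u"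
proof (induction h t arbitrary: k rule: height_le.induct)
  case (2 h b cs)
  show ?case
  proof (cases "(d, u) = (k, CNode b cs) \<and> b")
    case True
    with "2.prems" show ?thesis by auto
  next
    case False
    then obtain c where c: "c \<in> set cs" "(d, u) \<in> set (cnodes (Suc k) c)"
      using "2.prems" by (auto split: if_splits)
    moreover have "height_le h c"
      using "2.prems"(1) c(1) by simp
    ultimately have "Suc k \<le> d \<and> d - Suc k \<le> h \<and> height_le (h - (d - Suc k)) u"
      using "2.IH" by blast
    moreover have "Suc h - (d - k) = h - (d - Suc k)" if "Suc k \<le> d"
      using that by simp
    ultimately show ?thesis by auto
  qed
qed (auto split: if_splits)

lemma uheight_colors_colored_gw:
  assumes "t \<in> set_pmf (colored_gw mu rho D)" "(d, s) \<in> set (colors t)"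
  shows "uheight s \<le> D - d"
proof -
  obtain u where u: "(d, u) \<in> set (cnodes 0 t)" "s = color_shape u"
    using assms(2) by (auto simp: colors_def)
  have "height_le D t"
    using assms(1) height_le_gen by (simp add: colored_gw_def)
  with u show ?thesis
    using height_le_cnodes uheight_color_shape_le by force
qed

lemma colors_at_depth_colored_gw:
  assumes "t \<in> set_pmf (colored_gw mu rho D)" "(D, s) \<in> set (colors t)"
  shows "s = UNode []"
  using uheight_colors_colored_gw[OF assms] by (simp add: uheight_eq_0_iff)

lemma cnodes_ge: "(d, u) \<in> set (cnodes k t) \<Longrightarrow> k \<le> d"
  by (induction k t arbitrary: d u rule: cnodes.induct) (auto split: if_splits dest: Suc_leD)

lemma length_filter_cnodes: "length (filter (\<lambda>x. fst x = k + e) (cnodes k t)) = zeta e t"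
proof (induction k t arbitrary: e rule: cnodes.induct)
  case (1 k b cs)
  show ?case
  proof (cases e)
    case 0
    have "filter (\<lambda>x. fst x = k) (concat (map (cnodes (Suc k)) cs)) = []"
      by (auto simp: filter_empty_conv dest: cnodes_ge)
    with 0 show ?thesis by (simp add: zeta_def)
  next
    case (Suc e')
    then have "length (filter (\<lambda>x. fst x = k + e) (cnodes k (CNode b cs)))
        = (\<Sum>c\<leftarrow>cs. length (filter (\<lambda>x. fst x = Suc k + e') (cnodes (Suc k) c)))"
      by (simp add: length_concat filter_concat o_def)
    also have "\<dots> = (\<Sum>c\<leftarrow>cs. zeta e' c)"
      using 1 by (intro arg_cong[where f = sum_list] map_cong) auto
    also have "\<dots> = zeta e (CNode b cs)"
      using Suc by (simp add: zeta_def length_concat filter_concat o_def)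
    finally show ?thesis .
  qed
qed

lemma length_filter_colors: "length (filter (\<lambda>(d, s). d = e) (colors t)) = zeta e t"
  using length_filter_cnodes[of 0 e t] by (simp add: colors_def filter_map o_def case_prod_beta)

lemma binomial_mixture_gen:
  "1 \<le> e \<Longrightarrow> e \<le> h \<Longrightarrow> h \<le> D \<Longrightarrow>
     binomial_mixture (rho (D - h + e)) (map_pmf (\<lambda>t. (xi e t, zeta e t)) (gen mu rho D h b))"
proof (induction h arbitrary: e b)
  case 0
  then show ?case by simp
next
  case (Suc h)
  define C where "C = bernoulli_pmf (rho (D - h)) \<bind> gen mu rho D h"
  have gen_Suc: "map_pmf (\<lambda>t. (xi e t, zeta e t)) (gen mu rho D (Suc h) b)
      = poisson_pmf mu \<bind> (\<lambda>n. map_pmf (\<lambda>cs. (xi e (CNode b cs), zeta e (CNode b cs))) (replicate_pmf n C))"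
    by (simp add: map_bind_pmf C_def pmf.map_comp o_def flip: map_pmf_def)
  show ?case
  proof (cases "e = 1")
    case True
    have "level 1 (CNode b cs) = cs" for cs
      by (induction cs) auto
    then have "map_pmf (\<lambda>cs. (xi e (CNode b cs), zeta e (CNode b cs))) (replicate_pmf n C)
        = map_pmf (\<lambda>bs. (n, length (filter id bs))) (replicate_pmf n (map_pmf cflag C))" for n
      unfolding replicate_pmf_map_pmf pmf.map_comp
      by (intro map_pmf_cong refl) (auto simp: True xi_def zeta_def set_replicate_pmf filter_map)
    then have "map_pmf (\<lambda>cs. (xi e (CNode b cs), zeta e (CNode b cs))) (replicate_pmf n C)
        = trials_pmf (rho (D - h)) n" for n
      by (simp add: C_def map_pmf_cflag_child trials_pmf_def)
    moreover have "D - Suc h + e = D - h"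
      using True Suc.prems by simp
    ultimately show ?thesis
      unfolding gen_Suc by (simp add: binomial_mixture_bind binomial_mixture_trials_pmf)
  next
    case False
    then obtain e' where e': "e = Suc e'" "1 \<le> e'" "e' \<le> h"
      using Suc.prems by (cases e) auto
    have "map_pmf (\<lambda>cs. (xi e (CNode b cs), zeta e (CNode b cs))) (replicate_pmf n C)
        = map_pmf (\<lambda>xs. (sum_list (map fst xs), sum_list (map snd xs)))
            (replicate_pmf n (map_pmf (\<lambda>t. (xi e' t, zeta e' t)) C))" for n
      using e' by (simp add: replicate_pmf_map_pmf pmf.map_comp o_def xi_def zeta_def length_concat filter_concat)
    moreover have "binomial_mixture (rho (D - h + e')) (map_pmf (\<lambda>t. (xi e' t, zeta e' t)) C)"
      unfolding C_def map_bind_pmf using Suc.IH[of e'] e' Suc.prems by (intro binomial_mixture_bind) auto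
    moreover have "D - Suc h + e = D - h + e'"
      using e' Suc.prems by simp
    ultimately show ?thesis
      unfolding gen_Suc by (simp add: binomial_mixture_bind binomial_mixture_sum_replicate)
  qed
qed

context
  fixes mu :: real and rho :: "nat \<Rightarrow> real" and D :: nat
  assumes mu_pos: "mu > 0" and rho_range: "\<And>t. t \<in> {1..D} \<Longrightarrow> 0 \<le> rho t \<and> rho t \<le> 1"
begin

text \<open>A child adopts its parent's colour with probability 1 - rho, independently of its own
  colour class, so Poisson thinning produces the Poisson(mu (1 - rho)) branching of the class.\<close>
lemma color_shape_gen: "h \<le> D \<Longrightarrow> map_pmf color_shape (gen mu rho D h b) = color_law mu rho D h"
proof (induction h arbitrary: b)
  case 0
  then show ?case by simp
next
  case (Suc h)
  define r where "r = rho (D - h)"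
  have r: "0 \<le> r" "r \<le> 1" using rho_range[of "D - h"] Suc.prems by (auto simp: r_def)
  define C where "C = bernoulli_pmf r \<bind> gen mu rho D h"
  define L where "L = color_law mu rho D h"
  have marked: "map_pmf (\<lambda>c. (\<not> cflag c, color_shape c)) C = pair_pmf (bernoulli_pmf (1 - r)) L"
    unfolding C_def L_def using Suc by (intro map_pmf_flag_color_shape_child r) simp
  have "map_pmf color_shape (gen mu rho D (Suc h) b)
      = poisson_pmf mu \<bind> (\<lambda>n.
          map_pmf (\<lambda>cs. UNode (map color_shape (filter (\<lambda>c. \<not> cflag c) cs))) (replicate_pmf n C))"
    by (simp add: map_bind_pmf C_def r_def map_pmf_def[symmetric] pmf.map_comp o_def)
  also have "\<dots> = poisson_pmf mu \<bind> (\<lambda>n. map_pmf UNode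
          (map_pmf (\<lambda>xs. map snd (filter fst xs)) (replicate_pmf n (pair_pmf (bernoulli_pmf (1 - r)) L))))"
    by (simp flip: marked add: replicate_pmf_map_pmf pmf.map_comp o_def filter_map)
  also have "\<dots> = (poisson_pmf mu \<bind> (\<lambda>n. binomial_pmf n (1 - r))) \<bind> (\<lambda>m. map_pmf UNode (replicate_pmf m L))"
    using r by (simp add: replicate_pmf_thinning bind_assoc_pmf map_bind_pmf)
  also have "\<dots> = color_law mu rho D (Suc h)"
    using r mu_pos by (simp add: poisson_thinning L_def r_def map_pmf_def)
  finally show ?case .
qed

lemma law_given_past_colors_from:
  assumes "h \<le> D"
    and "law_given_past (\<lambda>d. color_law mu rho D (D - d))
           (map_pmf (\<lambda>t. (color_shape t, descendant_colors (D - h) t)) (gen mu rho D h True))"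
  shows "law_given_past (\<lambda>d. color_law mu rho D (D - d))
           (map_pmf (\<lambda>t. (c, colors_from (D - h) t)) (gen mu rho D h True))"
proof -
  let ?J = "map_pmf (\<lambda>t. (color_shape t, descendant_colors (D - h) t)) (gen mu rho D h True)"
  have "map_pmf (\<lambda>t. (c, colors_from (D - h) t)) (gen mu rho D h True)
      = map_pmf (\<lambda>x. (c, (D - h, fst x) # snd x)) ?J"
    unfolding pmf.map_comp by (intro map_pmf_cong refl) (auto simp: colors_from_eq dest: cflag_gen)
  moreover have "map_pmf fst ?J = color_law mu rho D (D - (D - h))"
    using color_shape_gen[of h True] assms(1) by (simp add: pmf.map_comp o_def)
  ultimately show ?thesis
    using assms(2) by (simp add: law_given_past_Cons)
qed

lemma law_given_past_gen:
  "h \<le> D \<Longrightarrow> law_given_past (\<lambda>d. color_law mu rho D (D - d))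
     (map_pmf (\<lambda>t. (color_shape t, descendant_colors (D - h) t)) (gen mu rho D h b))"
proof (induction h arbitrary: b)
  case 0
  then show ?case by (simp add: law_given_past_return)
next
  case (Suc h)
  let ?L = "\<lambda>d. color_law mu rho D (D - d)"
  define child where "child c = (if cflag c then None else Some (color_shape c), colors_from (D - h) c)"
    for c
  have child: "law_given_past ?L (map_pmf child (gen mu rho D h b'))" for b'
  proof (cases b')
    case True
    have "map_pmf child (gen mu rho D h b') = map_pmf (\<lambda>t. (None, colors_from (D - h) t)) (gen mu rho D h b')"
      by (intro map_pmf_cong refl) (auto simp: child_def True dest: cflag_gen)
    moreover have "law_given_past ?L (map_pmf (\<lambda>t. (None, colors_from (D - h) t)) (gen mu rho D h True))"
      using Suc.prems by (intro law_given_past_colors_from Suc.IH) simp_all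
    ultimately show ?thesis
      by (simp add: True)
  next
    case False
    have "map_pmf child (gen mu rho D h b')
        = map_pmf (\<lambda>x. (Some (fst x), snd x))
            (map_pmf (\<lambda>t. (color_shape t, descendant_colors (D - h) t)) (gen mu rho D h b'))"
      unfolding pmf.map_comp
      by (intro map_pmf_cong refl) (auto simp: child_def False colors_from_eq dest: cflag_gen)
    then show ?thesis
      using Suc by (simp add: law_given_past_map_tag)
  qed
  have parent: "(UNode (map color_shape (filter (\<lambda>c. \<not> cflag c) cs)), concat (map (colors_from (D - h)) cs))
      = (UNode (List.map_filter id (map fst (map child cs))), concat (map snd (map child cs)))" for cs
    by (induction cs) (auto simp: child_def)
  have "map_pmf (\<lambda>t. (color_shape t, descendant_colors (D - Suc h) t)) (gen mu rho D (Suc h) b)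
      = poisson_pmf mu \<bind> (\<lambda>n. map_pmf (\<lambda>cs. (UNode (map color_shape (filter (\<lambda>c. \<not> cflag c) cs)),
            concat (map (colors_from (D - h)) cs))) (replicate_pmf n (bernoulli_pmf (rho (D - h)) \<bind> gen mu rho D h)))"
    using Suc.prems by (simp add: map_bind_pmf pmf.map_comp o_def Suc_diff_Suc flip: map_pmf_def)
  also have "\<dots> = poisson_pmf mu \<bind> (\<lambda>n. map_pmf (\<lambda>x. (UNode (List.map_filter id (fst x)), snd x))
          (map_pmf (\<lambda>xs. (map fst xs, concat (map snd xs)))
            (replicate_pmf n (map_pmf child (bernoulli_pmf (rho (D - h)) \<bind> gen mu rho D h)))))"
    unfolding parent replicate_pmf_map_pmf pmf.map_comp o_def by simp
  finally show ?case
    by (simp only: map_bind_pmf) (intro law_given_past_bind law_given_past_map_tag law_given_past_concat_replicate child)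
qed

lemma law_given_past_colored_gw:
  "law_given_past (\<lambda>d. color_law mu rho D (D - d)) (map_pmf (\<lambda>t. ((), colors t)) (colored_gw mu rho D))"
  using law_given_past_colors_from[OF _ law_given_past_gen, of D]
  by (simp add: colored_gw_def colors_eq_colors_from)

lemma cond_pmf_colors_colored_gw:
  assumes "E = {t. j < length (colors t) \<and> take j (colors t) \<in> Q \<and> fst (colors t ! j) = d}"
    and "set_pmf (colored_gw mu rho D) \<inter> E \<noteq> {}"
  shows "map_pmf (\<lambda>t. snd (colors t ! j)) (cond_pmf (colored_gw mu rho D) E) = color_law mu rho D (D - d)"
  using cond_pmf_law_given_past[OF law_given_past_colored_gw assms] .

lemma cond_pmf_colors_prefix_colored_gw:
  assumes "set_pmf (colored_gw mu rho D)
      \<inter> {t. j < length (colors t) \<and> take j (colors t) = p \<and> fst (colors t ! j) = d} \<noteq> {}"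
  shows "map_pmf (\<lambda>t. snd (colors t ! j))
           (cond_pmf (colored_gw mu rho D) {t. j < length (colors t) \<and> take j (colors t) = p \<and> fst (colors t ! j) = d})
       = color_law mu rho D (D - d)"
  using assms by (intro cond_pmf_colors_colored_gw[where Q = "{p}"]) simp_all

lemma nn_integral_ulevel_color_law:
  "h \<le> D \<Longrightarrow> (\<integral>\<^sup>+s. of_nat (length (ulevel h s)) \<partial>color_law mu rho D h)
     = ennreal (\<Prod>i<h. mu * (1 - rho (D - i)))"
proof (induction h)
  case 0
  then show ?case by simp
next
  case (Suc h)
  define r where "r = mu * (1 - rho (D - h))"
  have r: "r \<ge> 0" using rho_range[of "D - h"] Suc.prems mu_pos by (auto simp: r_def)
  have "of_nat (length (concat (map (ulevel h) cs)))
      = (sum_list (map (\<lambda>c. of_nat (length (ulevel h c))) cs) :: ennreal)" for cs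
    by (induction cs) auto
  then have "(\<integral>\<^sup>+s. of_nat (length (ulevel (Suc h) s)) \<partial>color_law mu rho D (Suc h))
      = (\<integral>\<^sup>+n. of_nat n * ennreal (\<Prod>i<h. mu * (1 - rho (D - i))) \<partial>poisson0 r)"
    using Suc by (simp add: r_def nn_integral_sum_list_replicate_pmf)
  also have "\<dots> = ennreal r * ennreal (\<Prod>i<h. mu * (1 - rho (D - i)))"
    using r by (simp add: nn_integral_multc nn_integral_poisson0)
  also have "\<dots> = ennreal (\<Prod>i<Suc h. mu * (1 - rho (D - i)))"
    using r by (simp add: r_def mult.commute flip: ennreal_mult')
  finally show ?case .
qed

lemma expectation_ulevel_color_law:
  assumes "d < D"
  shows "measure_pmf.expectation (color_law mu rho D (D - d)) (\<lambda>s. real (length (ulevel (D - d) s)))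
       = mu ^ (D - d) * (\<Prod>t\<in>{d+1..D}. 1 - rho t)"
proof -
  have "0 \<le> (\<Prod>i<D - d. mu * (1 - rho (D - i)))"
    using rho_range mu_pos by (intro prod_nonneg) (auto simp: less_imp_le)
  then have "measure_pmf.expectation (color_law mu rho D (D - d)) (\<lambda>s. real (length (ulevel (D - d) s)))
      = (\<Prod>i<D - d. mu * (1 - rho (D - i)))"
    using nn_integral_ulevel_color_law[of "D - d"]
    by (subst integral_eq_nn_integral) (auto simp flip: ennreal_of_nat_eq_real_of_nat)
  also have "\<dots> = mu ^ (D - d) * (\<Prod>i<D - d. 1 - rho (D - i))"
    by (simp add: prod.distrib)
  also have "(\<Prod>i<D - d. 1 - rho (D - i)) = (\<Prod>t\<in>{d+1..D}. 1 - rho t)"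
    by (rule prod.reindex_bij_witness[where i = "\<lambda>t. D - t" and j = "\<lambda>i. D - i"]) (use assms in auto)
  finally show ?thesis .
qed

lemma cond_pmf_zeta_xi_colored_gw:
  assumes "d \<in> {1..D}" and "set_pmf (colored_gw mu rho D) \<inter> {t. xi d t = m} \<noteq> {}"
  shows "map_pmf (zeta d) (cond_pmf (colored_gw mu rho D) {t. xi d t = m}) = binomial_pmf m (rho d)"
  using binomial_mixture_gen[of d D D rho mu True] rho_range[OF assms(1)] assms
  by (intro cond_pmf_binomial_mixture) (auto simp: colored_gw_def)

lemma expectation_leaves_colors_colored_gw:
  assumes "d < D"
    and "set_pmf (colored_gw mu rho D) \<inter> {t. j < length (colors t) \<and> fst (colors t ! j) = d} \<noteq> {}"
  shows "measure_pmf.expectation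
           (cond_pmf (colored_gw mu rho D) {t. j < length (colors t) \<and> fst (colors t ! j) = d})
           (\<lambda>t. real (length (ulevel (D - d) (snd (colors t ! j)))))
       = mu ^ (D - d) * (\<Prod>t\<in>{d+1..D}. 1 - rho t)"
proof -
  let ?C = "cond_pmf (colored_gw mu rho D) {t. j < length (colors t) \<and> fst (colors t ! j) = d}"
  have "map_pmf (\<lambda>t. snd (colors t ! j)) ?C = color_law mu rho D (D - d)"
    using assms(2) by (intro cond_pmf_colors_colored_gw[where Q = UNIV]) auto
  moreover have "measure_pmf.expectation ?C (\<lambda>t. real (length (ulevel (D - d) (snd (colors t ! j)))))
      = measure_pmf.expectation (map_pmf (\<lambda>t. snd (colors t ! j)) ?C) (\<lambda>s. real (length (ulevel (D - d) s)))"
    by simp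
  ultimately show ?thesis
    using expectation_ulevel_color_law[OF assms(1)] by simp
qed

end

theorem proposition11p1:
  fixes mu :: real and D :: nat and rho :: "nat \<Rightarrow> real"
  assumes mu_pos: "mu > 0" and D_ge: "D \<ge> 1"
    and rho_range: "\<And>t. t \<in> {1..D} \<Longrightarrow> 0 \<le> rho t \<and> rho t \<le> 1"
    and rho1: "rho 1 = 1"
  defines "T \<equiv> colored_gw mu rho D"
  shows
    \<comment> \<open>(a)\<close>
    "(\<forall>d \<in> {1..D}. \<forall>m.
        set_pmf T \<inter> {t. xi d t = m} \<noteq> {} \<longrightarrow>
        map_pmf (zeta d) (cond_pmf T {t. xi d t = m}) = binomial_pmf m (rho d))
     \<comment> \<open>(b) depth bound of colour subtrees\<close>
   \<and> (\<forall>t \<in> set_pmf T. \<forall>(d, s) \<in> set (colors t). uheight s \<le> D - d)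
     \<comment> \<open>(b) law and (sequential) independence of colour subtrees\<close>
   \<and> (\<forall>j d p. set_pmf T \<inter> {t. j < length (colors t) \<and> take j (colors t) = p
                                 \<and> fst (colors t ! j) = d} \<noteq> {} \<longrightarrow>
        map_pmf (\<lambda>t. snd (colors t ! j))
          (cond_pmf T {t. j < length (colors t) \<and> take j (colors t) = p
                          \<and> fst (colors t ! j) = d})
        = color_law mu rho D (D - d))
     \<comment> \<open>(c) mean number of same-colour leaves for colours created at depth d < D\<close>
   \<and> (\<forall>j d. d < D \<longrightarrow> set_pmf T \<inter> {t. j < length (colors t) \<and> fst (colors t ! j) = d} \<noteq> {} \<longrightarrow>
        measure_pmf.expectation
          (cond_pmf T {t. j < length (colors t) \<and> fst (colors t ! j) = d})
          (\<lambda>t. real (length (ulevel (D - d) (snd (colors t ! j)))))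
        = mu ^ (D - d) * (\<Prod>s\<in>{d+1..D}. (1 - rho s)))
     \<comment> \<open>(c) colours created at depth D: \<zeta>_D of them, each with exactly one leaf\<close>
   \<and> (\<forall>t \<in> set_pmf T.
        length (filter (\<lambda>(d, s). d = D) (colors t)) = zeta D t
      \<and> (\<forall>(d, s) \<in> set (colors t). d = D \<longrightarrow> length (ulevel 0 s) = 1 \<and> s = UNode []))"
  unfolding T_def
  using cond_pmf_zeta_xi_colored_gw[where mu = mu, OF mu_pos rho_range]
    cond_pmf_colors_prefix_colored_gw[where mu = mu, OF mu_pos rho_range]
    expectation_leaves_colors_colored_gw[where mu = mu, OF mu_pos rho_range]
  by (auto simp: length_filter_colors intro: uheight_colors_colored_gw dest: colors_at_depth_colored_gw)

end
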